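(* Let $G$ be a connected simple graph without bridges whose edge set is identified with $[d+1]$, let $B_1,\dots,B_n$ be the bases (spanning trees) of its graphic matroid, all of cardinality $k$, and let $V=(-e_{B_1},\dots,-e_{B_n})$ in $\mathbb{T}^d$. Let $\mathbb{K}$ be a field and $I=\langle x^{\mathbf{t}(p)}: p\in\mathbb{T}^d\rangle\subseteq\mathbb{K}[x_1,\dots,x_{d+1}]$ be the coarse type ideal, where $\mathbf{t}(p)$ is the coarse type of $p$ with respect to $V$ and $x^{\mathbf{t}}=x_1^{t_1}\cdots x_{d+1}^{t_{d+1}}$. Then $I$ is generated by the monomials $$x_{i_1}^{t_{i_1}}x_{i_2}^{t_{i_2}}\cdots x_{i_{d'+1}}^{t_{i_{d'+1}}}$$ where $d'\ge 0$, $i_1,\dots,i_{d'+1}\in[d+1]$ are pairwise distinct with $[d+1]\setminus\{i_1,\dots,i_{d'}\}$ containing a basis, and $$(t_{i_1},t_{i_2},\dots,t_{i_{d'+1}})=\big(b_{\{i_1\},\emptyset}+b_{\emptyset,\{i_1,\dots,i_{d'+1}\}},\,b_{\{i_2\},\{i_1\}},\,\dots,\,b_{\{i_{d'+1}\},\{i_1,\dots,i_{d'}\}}\big).$$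
   Context: Tropical arithmetic is min-plus; $\mathbb{T}^d=\mathbb{R}^{d+1}/\mathbb{R}(1,\dots,1)$. For $B\subseteq[d+1]$, $e_B=\sum_{i\in B}e_i$. For $m\in[d+1]$ let $\bar S_m=\{\xi\in\mathbb{T}^d:\xi_m=\min_i\xi_i\}$. For $V=(v_1,\dots,v_n)$ and $x\in\mathbb{T}^d$, $\operatorname{type}_V(x)=(T_1,\dots,T_{d+1})$ with $T_m=\{l\in[n]:v_l\in x+\bar S_m\}$, and the coarse type of $x$ is $(|T_1|,\dots,|T_{d+1}|)$. For $I,J\subseteq[d+1]$, $b_{I,J}$ is the number of bases $B$ with $I\subseteq B$ and $J\cap B=\emptyset$. *)

theory Defs
  imports Complex_Main "HOL-Library.Poly_Mapping"
begin

section \<open>Graphs: edges indexed by a finite type 'e (the set [d+1]), vertices a finite type 'v\<close>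

text \<open>A graph on vertex set UNIV::'v set with edge e joining the two vertices ends e.\<close>

definition simple_graph :: "('e \<Rightarrow> 'v set) \<Rightarrow> bool" where
  "simple_graph ends \<longleftrightarrow> (\<forall>e. card (ends e) = 2) \<and> inj ends"

definition adj :: "('e \<Rightarrow> 'v set) \<Rightarrow> 'e set \<Rightarrow> 'v \<Rightarrow> 'v \<Rightarrow> bool" where
  "adj ends F u v \<longleftrightarrow> (\<exists>e\<in>F. ends e = {u, v})"

definition connects :: "('e \<Rightarrow> 'v set) \<Rightarrow> 'e set \<Rightarrow> bool" where
  "connects ends F \<longleftrightarrow> (\<forall>u v. (adj ends F)\<^sup>*\<^sup>* u v)"

definition bridgeless :: "('e \<Rightarrow> 'v set) \<Rightarrow> bool" where
  "bridgeless ends \<longleftrightarrow> (\<forall>e. connects ends (UNIV - {e}))"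

text \<open>Spanning trees = minimal connected spanning subgraphs = bases of the graphic matroid
  of a connected graph.\<close>
definition spanning_tree :: "('e \<Rightarrow> 'v set) \<Rightarrow> 'e set \<Rightarrow> bool" where
  "spanning_tree ends B \<longleftrightarrow> connects ends B \<and> (\<forall>e\<in>B. \<not> connects ends (B - {e}))"

definition bases :: "('e \<Rightarrow> 'v set) \<Rightarrow> 'e set set" where
  "bases ends = {B. spanning_tree ends B}"

definition bIJ :: "('e \<Rightarrow> 'v set) \<Rightarrow> 'e set \<Rightarrow> 'e set \<Rightarrow> nat" where
  "bIJ ends I J = card {B \<in> bases ends. I \<subseteq> B \<and> J \<inter> B = {}}"

text \<open>The point -e_B (a representative in R^(d+1) of its class in T^d).\<close>
definition negE :: "'e set \<Rightarrow> 'e \<Rightarrow> real" where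
  "negE B i = - (if i \<in> B then 1 else 0)"

text \<open>v \<in> x + S_m, i.e. (v - x)_m = min_i (v - x)_i; invariant under the quotient.\<close>
definition in_sector :: "('e \<Rightarrow> real) \<Rightarrow> ('e \<Rightarrow> real) \<Rightarrow> 'e \<Rightarrow> bool" where
  "in_sector x v m \<longleftrightarrow> (\<forall>i. v m - x m \<le> v i - x i)"

definition coarse_type :: "('e \<Rightarrow> 'v set) \<Rightarrow> ('e \<Rightarrow> real) \<Rightarrow> 'e \<Rightarrow> nat" where
  "coarse_type ends x m = card {B \<in> bases ends. in_sector x (negE B) m}"

type_synonym ('e, 'k) mpoly = "('e \<Rightarrow>\<^sub>0 nat) \<Rightarrow>\<^sub>0 'k"

definition Var :: "'e \<Rightarrow> ('e, 'k::comm_ring_1) mpoly" where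
  "Var e = Poly_Mapping.single (Poly_Mapping.single e 1) 1"

definition monom :: "('e::finite \<Rightarrow> nat) \<Rightarrow> ('e, 'k::comm_ring_1) mpoly" where
  "monom t = (\<Prod>e\<in>UNIV. Var e ^ t e)"

definition ideal_gen :: "'a::comm_ring_1 set \<Rightarrow> 'a set" where
  "ideal_gen S = {p. \<exists>F c. finite F \<and> F \<subseteq> S \<and> p = (\<Sum>g\<in>F. c g * g)}"

definition coarse_type_ideal :: "('e::finite \<Rightarrow> 'v set) \<Rightarrow> ('e, 'k::field) mpoly set" where
  "coarse_type_ideal ends = ideal_gen {monom (coarse_type ends p) | p. True}"

text \<open>Exponent t_{i_j} (0-based position j in list is = [i_1,...,i_{d'+1}])\<close>
definition gen_exp :: "('e \<Rightarrow> 'v set) \<Rightarrow> 'e list \<Rightarrow> nat \<Rightarrow> nat" where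
  "gen_exp ends is j =
     (if j = 0 then bIJ ends {is ! 0} {} + bIJ ends {} (set is)
      else bIJ ends {is ! j} (set (take j is)))"

definition gen_monom :: "('e \<Rightarrow> 'v set) \<Rightarrow> 'e list \<Rightarrow> ('e, 'k::comm_ring_1) mpoly" where
  "gen_monom ends is = (\<Prod>j<length is. Var (is ! j) ^ gen_exp ends is j)"

definition admissible :: "('e \<Rightarrow> 'v set) \<Rightarrow> 'e list \<Rightarrow> bool" where
  "admissible ends is \<longleftrightarrow> is \<noteq> [] \<and> distinct is \<and>
     (\<exists>B\<in>bases ends. B \<subseteq> UNIV - set (butlast is))"

end

theory Submission
  imports Defs
begin

text \<open>The vertex -e_B lies in the sector m of x exactly when m maximises x + e_B.
  For an admissible list i_1, ..., i_{d'+1}, a point decreasing in small steps along the list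
  and far below elsewhere puts every basis into the sector of the first listed element it
  contains, or of i_1 if it contains none; its coarse type is therefore bounded by the exponents
  of the generator and vanishes off the list. Conversely, for any x, list the coordinates within 1
  of the maximum in decreasing order of x and cut the list after its longest prefix whose
  complement still contains a basis: every basis counted in t_{i_j} then lies in the sector of
  i_j, so the coarse type dominates the exponents of this generator.\<close>

interpretation mult_module: module "(*) :: 'a::comm_ring_1 \<Rightarrow> 'a \<Rightarrow> 'a"
  by unfold_locales (simp_all add: algebra_simps)

lemma ideal_gen_eq_span: "ideal_gen S = mult_module.span S"
  unfolding ideal_gen_def mult_module.span_explicit by blast

lemma ideal_gen_eqI:
  assumes "\<And>s. s \<in> S \<Longrightarrow> \<exists>t\<in>T. \<exists>q. s = q * t"
    and "\<And>t. t \<in> T \<Longrightarrow> \<exists>s\<in>S. \<exists>q. t = q * s"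
  shows "ideal_gen S = ideal_gen T"
  unfolding ideal_gen_eq_span mult_module.span_eq
  using assms by (blast intro: mult_module.span_scale mult_module.span_base)

definition list_pos :: "'a list \<Rightarrow> 'a \<Rightarrow> nat" where
  "list_pos xs y = (THE j. j < length xs \<and> xs ! j = y)"

lemma list_pos_nth: "distinct xs \<Longrightarrow> j < length xs \<Longrightarrow> list_pos xs (xs ! j) = j"
  unfolding list_pos_def by (rule the_equality) (auto simp: nth_eq_iff_index_eq)

lemma monom_eq_mult_monom:
  assumes "\<And>e. s e \<le> t e"
  shows "(monom t :: ('e::finite, 'k::comm_ring_1) mpoly) = monom (\<lambda>e. t e - s e) * monom s"
  unfolding monom_def prod.distrib[symmetric] power_add[symmetric]
  using assms by simp

definition gen_exponent :: "('e \<Rightarrow> 'v set) \<Rightarrow> 'e list \<Rightarrow> 'e \<Rightarrow> nat" where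
  "gen_exponent ends is e = (if e \<in> set is then gen_exp ends is (list_pos is e) else 0)"

lemma gen_exponent_nth:
  "distinct is \<Longrightarrow> j < length is \<Longrightarrow> gen_exponent ends is (is ! j) = gen_exp ends is j"
  by (simp add: gen_exponent_def list_pos_nth)

lemma gen_monom_eq_monom:
  assumes "distinct is"
  shows "(gen_monom ends is :: ('e::finite, 'k::comm_ring_1) mpoly) = monom (gen_exponent ends is)"
proof -
  have "monom (gen_exponent ends is) = (\<Prod>e\<in>set is. (Var e ^ gen_exponent ends is e :: ('e, 'k) mpoly))"
    unfolding monom_def by (rule prod.mono_neutral_right) (auto simp: gen_exponent_def)
  also have "\<dots> = (\<Prod>j<length is. Var (is ! j) ^ gen_exponent ends is (is ! j))"
    using prod.reindex[OF inj_on_nth[OF assms, of "{..<length is}"]]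
    by (simp add: lessThan_def atLeast0LessThan[symmetric] set_conv_nth image_Collect)
  also have "\<dots> = gen_monom ends is"
    unfolding gen_monom_def using assms by (simp add: gen_exponent_nth)
  finally show ?thesis by simp
qed

lemma monom_dvd_gen_monom:
  assumes "distinct is" and "\<And>e. e \<notin> set is \<Longrightarrow> t e = 0"
    and "\<And>j. j < length is \<Longrightarrow> t (is ! j) \<le> gen_exp ends is j"
  shows "\<exists>q. (gen_monom ends is :: ('e::finite, 'k::comm_ring_1) mpoly) = q * monom t"
proof -
  have "t e \<le> gen_exponent ends is e" for e
    using assms by (cases "e \<in> set is") (auto simp: in_set_conv_nth gen_exponent_nth)
  then show ?thesis
    unfolding gen_monom_eq_monom[OF assms(1)] by (blast intro: monom_eq_mult_monom)
qed

lemma gen_monom_dvd_monom: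
  assumes "distinct is" and "\<And>j. j < length is \<Longrightarrow> gen_exp ends is j \<le> t (is ! j)"
  shows "\<exists>q. (monom t :: ('e::finite, 'k::comm_ring_1) mpoly) = q * gen_monom ends is"
proof -
  have "gen_exponent ends is e \<le> t e" for e
    using assms by (cases "e \<in> set is") (auto simp: in_set_conv_nth gen_exponent_def list_pos_nth)
  then show ?thesis
    unfolding gen_monom_eq_monom[OF assms(1)] by (blast intro: monom_eq_mult_monom)
qed

lemma in_sector_negE_iff:
  "in_sector x (negE B) m \<longleftrightarrow> (\<forall>i. x i + of_bool (i \<in> B) \<le> x m + of_bool (m \<in> B))"
  unfolding in_sector_def negE_def by (auto simp: algebra_simps)

text \<open>Values in (-1, 0] decrease along the list; the value -2 keeps every other coordinate out
  of all sectors.\<close>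

definition staircase :: "'a list \<Rightarrow> 'a \<Rightarrow> real" where
  "staircase xs e = (if e \<in> set xs then - real (list_pos xs e) / real (length xs) else - 2)"

lemma staircase_nth:
  "distinct xs \<Longrightarrow> j < length xs \<Longrightarrow> staircase xs (xs ! j) = - real j / real (length xs)"
  by (simp add: staircase_def list_pos_nth)

lemma in_sector_staircase:
  assumes "distinct xs" and "xs \<noteq> []" and "in_sector (staircase xs) (negE B) m"
  obtains j where "j < length xs" and "m = xs ! j" and "set (take j xs) \<inter> B = {}"
    and "m \<in> B \<or> j = 0 \<and> set xs \<inter> B = {}"
proof -
  let ?x = "staircase xs" and ?L = "length xs"
  have max: "?x i + (if i \<in> B then 1 else 0) \<le> ?x m + (if m \<in> B then 1 else 0)" for i
    using assms(3) by (simp add: in_sector_negE_iff of_bool_def)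
  have val: "?x (xs ! k) = - real k / real ?L" if "k < ?L" for k
    using staircase_nth[OF assms(1) that] .
  have val_lt: "- real k / real ?L > - real j / real ?L" if "k < j" for k j
    using that assms(2) by (simp add: divide_strict_right_mono)
  have val_gt: "- real k / real ?L > -1" if "k < ?L" for k
    using that by (simp add: divide_less_eq)
  have "m \<in> set xs"
  proof (rule ccontr)
    assume "m \<notin> set xs"
    then show False
      using max[of "xs ! 0"] val[of 0] assms(2) by (cases "m \<in> B"; cases "xs ! 0 \<in> B") (auto simp: staircase_def)
  qed
  then obtain j where j: "j < ?L" "m = xs ! j" by (auto simp: in_set_conv_nth)
  have before: "xs ! k \<notin> B" if "k < j" for k
  proof
    assume "xs ! k \<in> B"
    then have "- real k / real ?L + 1 \<le> - real j / real ?L + 1"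
      using max[of "xs ! k"] val[of k] val[of j] that j by (cases "m \<in> B") auto
    then show False
      using val_lt[OF that] by linarith
  qed
  then have "set (take j xs) \<inter> B = {}"
    by (auto simp: in_set_conv_nth)
  moreover have "j = 0 \<and> set xs \<inter> B = {}" if "m \<notin> B"
  proof
    show disj: "set xs \<inter> B = {}"
    proof (rule ccontr)
      assume "set xs \<inter> B \<noteq> {}"
      then obtain k where k: "k < ?L" "xs ! k \<in> B"
        by (auto simp: in_set_conv_nth)
      then have "- real k / real ?L + 1 \<le> - real j / real ?L"
        using max[of "xs ! k"] val[of k] val[of j] j that by simp
      moreover have "0 \<le> real j / real ?L"
        by simp
      ultimately show False
        using val_gt[OF k(1)] by linarith
    qed
    show "j = 0"
    proof (rule ccontr)
      assume "j \<noteq> 0"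
      moreover have "xs ! 0 \<notin> B"
        using disj assms(2) nth_mem[of 0 xs] by blast
      ultimately show False
        using max[of "xs ! 0"] val[of 0] val[of j] j that assms(2) by (simp add: divide_le_0_iff)
    qed
  qed
  ultimately show thesis
    using j that by blast
qed

lemma coarse_type_staircase_le_gen_exp:
  fixes ends :: "'e::finite \<Rightarrow> 'v set"
  assumes "distinct xs" and "j < length xs"
  shows "coarse_type ends (staircase xs) (xs ! j) \<le> gen_exp ends xs j"
proof -
  let ?first = "{B \<in> bases ends. {xs ! j} \<subseteq> B \<and> set (take j xs) \<inter> B = {}}"
    and ?avoid = "if j = 0 then {B \<in> bases ends. {} \<subseteq> B \<and> set xs \<inter> B = {}} else {}"
  have "{B \<in> bases ends. in_sector (staircase xs) (negE B) (xs ! j)} \<subseteq> ?first \<union> ?avoid"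
  proof
    fix B assume "B \<in> {B \<in> bases ends. in_sector (staircase xs) (negE B) (xs ! j)}"
    then have B: "B \<in> bases ends" "in_sector (staircase xs) (negE B) (xs ! j)"
      by auto
    have "xs \<noteq> []"
      using assms(2) by auto
    then obtain j' where j': "j' < length xs" "xs ! j = xs ! j'" "set (take j' xs) \<inter> B = {}"
      "xs ! j \<in> B \<or> j' = 0 \<and> set xs \<inter> B = {}"
      using in_sector_staircase[OF assms(1) _ B(2)] by blast
    moreover have "j' = j"
      using j' assms nth_eq_iff_index_eq by metis
    ultimately show "B \<in> ?first \<union> ?avoid"
      using B by (cases "j = 0") auto
  qed
  then have "coarse_type ends (staircase xs) (xs ! j) \<le> card (?first \<union> ?avoid)"
    unfolding coarse_type_def by (rule card_mono[rotated]) simp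
  also have "\<dots> \<le> card ?first + card ?avoid"
    by (rule card_Un_le)
  also have "\<dots> = gen_exp ends xs j"
    by (simp add: gen_exp_def bIJ_def)
  finally show ?thesis .
qed

lemma coarse_type_staircase_outside:
  assumes "distinct xs" and "xs \<noteq> []" and "e \<notin> set xs"
  shows "coarse_type ends (staircase xs) e = 0"
proof -
  have "\<not> in_sector (staircase xs) (negE B) e" for B
  proof
    assume "in_sector (staircase xs) (negE B) e"
    then obtain j where "j < length xs" and "e = xs ! j"
      using in_sector_staircase[OF assms(1,2)] by blast
    then show False
      using assms(3) by simp
  qed
  then show ?thesis
    by (simp add: coarse_type_def)
qed

context
  fixes x :: "'e::finite \<Rightarrow> real" and xs :: "'e list"
  assumes set_xs: "set xs = {i. Max (range x) - 1 < x i}"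
    and sorted_xs: "sorted_wrt (\<lambda>a b. x b \<le> x a) xs"
begin

lemma x_nth_antimono: "j \<le> k \<Longrightarrow> k < length xs \<Longrightarrow> x (xs ! k) \<le> x (xs ! j)"
  using sorted_wrt_nth_less[OF sorted_xs] by (cases "j = k") auto

lemma max_in_top_layer:
  obtains a where "a \<in> set xs" and "x a = Max (range x)"
proof -
  have "Max (range x) \<in> range x"
    by (rule Max_in) auto
  then obtain a where "x a = Max (range x)"
    by (metis rangeE)
  moreover have "a \<in> set xs"
    using set_xs calculation by simp
  ultimately show thesis
    using that by blast
qed

lemma top_layer_nonempty: "xs \<noteq> []"
  using max_in_top_layer by force

lemma head_in_top_layer: "xs ! 0 \<in> set xs"
  using top_layer_nonempty by simp

lemma head_eq_Max: "x (xs ! 0) = Max (range x)"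
proof -
  obtain k where "k < length xs" and "x (xs ! k) = Max (range x)"
    using max_in_top_layer by (metis in_set_conv_nth)
  then show ?thesis
    using x_nth_antimono[of 0 k] by (simp add: antisym)
qed

lemma head_is_max: "x i \<le> x (xs ! 0)"
  by (simp add: head_eq_Max)

lemma set_xs_head: "set xs = {i. x (xs ! 0) - 1 < x i}"
  by (simp add: set_xs head_eq_Max)

lemma in_sector_first_in_basis:
  assumes "j < length xs" and "xs ! j \<in> B" and "set (take j xs) \<inter> B = {}"
  shows "in_sector x (negE B) (xs ! j)"
  unfolding in_sector_negE_iff
proof
  fix i
  have in_layer: "x (xs ! 0) - 1 < x (xs ! j)"
    using set_xs_head nth_mem[OF assms(1)] by auto
  have "x i \<le> x (xs ! j)" if "i \<in> B"
  proof (rule ccontr)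
    assume above: "\<not> x i \<le> x (xs ! j)"
    then have "i \<in> set xs"
      using set_xs_head in_layer by auto
    then obtain k where k: "k < length xs" "i = xs ! k"
      by (auto simp: in_set_conv_nth)
    show False
    proof (cases "k < j")
      case True
      then have "i \<in> set (take j xs)"
        using k nth_mem[of k "take j xs"] by simp
      then show False
        using that assms(3) by blast
    next
      case False
      then show False
        using x_nth_antimono[of j k] k above by simp
    qed
  qed
  then show "x i + of_bool (i \<in> B) \<le> x (xs ! j) + of_bool (xs ! j \<in> B)"
    using assms(2) in_layer head_is_max[of i] by auto
qed

lemma in_sector_head_if_avoiding:
  assumes "set xs \<inter> B = {}"
  shows "in_sector x (negE B) (xs ! 0)"
  unfolding in_sector_negE_iff
proof
  fix i
  have "xs ! 0 \<notin> B"
    using assms head_in_top_layer by blast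
  moreover have "x i + 1 \<le> x (xs ! 0)" if "i \<in> B"
    using that assms set_xs_head by auto
  ultimately show "x i + of_bool (i \<in> B) \<le> x (xs ! 0) + of_bool (xs ! 0 \<in> B)"
    using head_is_max[of i] by auto
qed

lemma bIJ_first_in_basis_le_coarse_type:
  assumes "j < length xs"
  shows "bIJ ends {xs ! j} (set (take j xs)) \<le> coarse_type ends x (xs ! j)"
  unfolding bIJ_def coarse_type_def
  by (rule card_mono) (auto intro: in_sector_first_in_basis[OF assms])

lemma bIJ_head_le_coarse_type:
  "bIJ ends {xs ! 0} {} + bIJ ends {} (set xs) \<le> coarse_type ends x (xs ! 0)"
proof -
  let ?hit = "{B \<in> bases ends. {xs ! 0} \<subseteq> B \<and> {} \<inter> B = {}}"
    and ?avoid = "{B \<in> bases ends. {} \<subseteq> B \<and> set xs \<inter> B = {}}"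
  have "?hit \<inter> ?avoid = {}"
    using head_in_top_layer by blast
  then have "bIJ ends {xs ! 0} {} + bIJ ends {} (set xs) = card (?hit \<union> ?avoid)"
    unfolding bIJ_def by (simp add: card_Un_disjoint)
  also have "\<dots> \<le> coarse_type ends x (xs ! 0)"
    unfolding coarse_type_def using top_layer_nonempty
    by (intro card_mono) (auto intro: in_sector_first_in_basis in_sector_head_if_avoiding)
  finally show ?thesis .
qed

end

text \<open>The last conclusion says that the term b_{\<emptyset>, set is} of the first exponent vanishes unless
  the prefix is the whole list.\<close>

lemma exists_admissible_prefix:
  assumes "bases ends \<noteq> {}" and "xs \<noteq> []" and "distinct xs"
  obtains n where "0 < n" and "n \<le> length xs" and "admissible ends (take n xs)"
    and "bIJ ends {} (set (take n xs)) \<le> bIJ ends {} (set xs)"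
proof -
  define avoided where "avoided j \<longleftrightarrow> j < length xs \<and> (\<exists>B\<in>bases ends. set (take j xs) \<inter> B = {})"
    for j
  have "avoided 0"
    using assms(1,2) by (auto simp: avoided_def)
  then obtain r where r: "avoided r" and r_max: "\<And>j. avoided j \<Longrightarrow> j \<le> r"
    using Nat.ex_has_greatest_nat[of avoided 0 "length xs"] by (auto simp: avoided_def)
  have "admissible ends (take (Suc r) xs)"
    using r assms(3) by (auto simp: admissible_def avoided_def butlast_take)
  moreover have "bIJ ends {} (set (take (Suc r) xs)) \<le> bIJ ends {} (set xs)"
  proof (cases "Suc r < length xs")
    case True
    then have "\<not> avoided (Suc r)"
      using r_max by fastforce
    then have "{B \<in> bases ends. {} \<subseteq> B \<and> set (take (Suc r) xs) \<inter> B = {}} = {}"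
      using True by (auto simp: avoided_def)
    then show ?thesis
      unfolding bIJ_def by (metis card.empty zero_le)
  next
    case False
    then show ?thesis
      by simp
  qed
  ultimately show thesis
    using that[of "Suc r"] r by (simp add: avoided_def Suc_le_eq)
qed

lemma exists_admissible_gen_exp_le_coarse_type:
  fixes x :: "'e::finite \<Rightarrow> real"
  assumes "bases ends \<noteq> {}"
  obtains "is" where "admissible ends is"
    and "\<And>j. j < length is \<Longrightarrow> gen_exp ends is j \<le> coarse_type ends x (is ! j)"
proof -
  obtain xs where xs: "distinct xs" "set xs = {i. Max (range x) - 1 < x i}"
    "sorted_wrt (\<lambda>a b. x b \<le> x a) xs"
  proof -
    obtain ys where "distinct ys" and "set ys = {i. Max (range x) - 1 < x i}"
      using finite_distinct_list[of "{i. Max (range x) - 1 < x i}"] by auto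
    moreover have "sorted_wrt (\<lambda>a b. x b \<le> x a) (sort_key (\<lambda>i. - x i) ys)"
      using sorted_sort_key[of "\<lambda>i. - x i" ys] by (simp add: sorted_map)
    ultimately show thesis
      using that[of "sort_key (\<lambda>i. - x i) ys"] by simp
  qed
  note top = xs(2,3)
  obtain n where n: "0 < n" "n \<le> length xs" "admissible ends (take n xs)"
    and avoid: "bIJ ends {} (set (take n xs)) \<le> bIJ ends {} (set xs)"
    using exists_admissible_prefix[OF assms top_layer_nonempty[OF top] xs(1)] .
  have "gen_exp ends (take n xs) j \<le> coarse_type ends x (take n xs ! j)" if "j < length (take n xs)" for j
  proof (cases "j = 0")
    case True
    then show ?thesis
      using n avoid bIJ_head_le_coarse_type[OF top, of ends] by (simp add: gen_exp_def)
  next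
    case False
    then show ?thesis
      using that bIJ_first_in_basis_le_coarse_type[OF top, of j ends] by (simp add: gen_exp_def)
  qed
  then show thesis
    using that n(3) by blast
qed

lemma bases_nonempty:
  fixes ends :: "'e::finite \<Rightarrow> 'v set"
  assumes "connects ends UNIV"
  shows "bases ends \<noteq> {}"
proof -
  obtain F where F: "connects ends F" and F_min: "\<And>G. connects ends G \<Longrightarrow> card F \<le> card G"
    using ex_has_least_nat[of "connects ends" UNIV card] assms by blast
  have "\<not> connects ends (F - {e})" if "e \<in> F" for e
    using F_min[of "F - {e}"] card_Diff1_less[OF finite that] by linarith
  then have "spanning_tree ends F"
    using F by (simp add: spanning_tree_def)
  then show ?thesis
    by (auto simp: bases_def)
qed

theorem mainTheorem2:
  fixes ends :: "'e::finite \<Rightarrow> 'v::finite set"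
  assumes "simple_graph ends"
    and "connects ends UNIV"
    and "bridgeless ends"
  shows "(coarse_type_ideal ends :: ('e, 'k::field) mpoly set)
           = ideal_gen {gen_monom ends is | is. admissible ends is}"
  unfolding coarse_type_ideal_def
proof (rule ideal_gen_eqI)
  fix s :: "('e, 'k) mpoly"
  assume "s \<in> {monom (coarse_type ends p) | p. True}"
  then obtain p where s: "s = monom (coarse_type ends p)"
    by blast
  obtain "is" where adm: "admissible ends is"
    and le: "\<And>j. j < length is \<Longrightarrow> gen_exp ends is j \<le> coarse_type ends p (is ! j)"
    using exists_admissible_gen_exp_le_coarse_type[OF bases_nonempty[OF assms(2)], where x = p]
    by blast
  have "distinct is"
    using adm by (simp add: admissible_def)
  then obtain q where "s = q * gen_monom ends is"
    unfolding s using gen_monom_dvd_monom le by blast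
  then show "\<exists>t\<in>{gen_monom ends is | is. admissible ends is}. \<exists>q. s = q * t"
    using adm by blast
next
  fix t :: "('e, 'k) mpoly"
  assume "t \<in> {gen_monom ends is | is. admissible ends is}"
  then obtain "is" where t: "t = gen_monom ends is" and dist: "distinct is" and "is \<noteq> []"
    by (auto simp: admissible_def)
  then obtain q where "t = q * monom (coarse_type ends (staircase is))"
    using monom_dvd_gen_monom[OF dist coarse_type_staircase_outside coarse_type_staircase_le_gen_exp]
    by blast
  then show "\<exists>s\<in>{monom (coarse_type ends p) | p. True}. \<exists>q. t = q * s"
    by blast
qed

end
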